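(* Let $\alpha\in(1,2]$ and let $\beta$ be given by $\frac1\alpha+\frac1\beta=1$. Let $W$ be a random variable with values in $[0,\infty)$ satisfying \[ \Pr(W\le t)=\int_0^t\frac{\Pr(W>t-v)}{v^{1/\alpha}}\,dv\qquad\forall t>0. \] Then \[ \mathbb E[e^{-sW}]=\frac{1}{1+c_\beta s^{1/\beta}}\qquad\forall s>0,\quad\text{where } c_\beta:=\Gamma\!\left(\tfrac1\beta\right)^{-1}. \] In particular, $W$ has the same distribution as $c_\beta^\beta\,\mathcal E^\beta\,\mathcal G_{1/\beta}$, where $\mathcal E$ and $\mathcal G_{1/\beta}$ are independent, $\Pr(\mathcal E>t)=e^{-t}$, and $\mathbb E[e^{-s\mathcal G_{1/\beta}}]=e^{-s^{1/\beta}}$ for $s>0$.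
   Context: $\Gamma(\cdot)$ is Euler's Gamma function. *)

theory Defs
  imports "HOL-Probability.Probability"
begin

end

theory Submission
  imports Defs
begin

text \<open>
  Put \<open>a = 1/\<beta> = 1 - 1/\<alpha>\<close>, \<open>F(t) = P(W \<le> t)\<close>, \<open>T(t) = P(W > t)\<close> and \<open>\<phi>(s) = E[exp(-sW)]\<close>.
  The hypothesis says that \<open>F\<close> is the convolution of \<open>T\<close> with \<open>v\<^sup>a\<^sup>-\<^sup>1\<close> on \<open>(0,\<infinity>)\<close>. Taking Laplace
  transforms, with \<open>\<L>F(s) = \<phi>(s)/s\<close>, \<open>\<L>T(s) = (1 - \<phi>(s))/s\<close> and \<open>\<L>(v\<^sup>a\<^sup>-\<^sup>1)(s) = \<Gamma>(a)/s\<^sup>a\<close>,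
  gives \<open>\<phi> = \<Gamma>(a) s\<^sup>-\<^sup>a (1 - \<phi>)\<close>, i.e. \<open>\<phi>(s) = 1/(1 + s\<^sup>a/\<Gamma>(a))\<close>.
  Conditioning on \<open>\<E>\<close>, the Laplace transform of \<open>c\<^sup>\<beta> \<E>\<^sup>\<beta> \<G>\<close> at \<open>s\<close> is \<open>E[exp(-c s\<^sup>a \<E>)] = 1/(1 + c s\<^sup>a)\<close>,
  the same function. Finally, a distribution on \<open>[0,\<infinity>)\<close> is determined by its Laplace transform
  at the integers: by Stone--Weierstrass, polynomials in \<open>exp(-x)\<close> approximate the continuous
  step functions that bound its distribution function.
\<close>

lemma (in prob_space) integrable_exp_neg_mult:
  fixes X :: "'a \<Rightarrow> real" and s :: real
  assumes "X \<in> borel_measurable M" "AE x in M. 0 \<le> X x" "0 \<le> s"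
  shows "integrable M (\<lambda>x. exp (- s * X x))"
proof (rule integrable_const_bound[of _ 1])
  show "AE x in M. norm (exp (- s * X x)) \<le> 1"
    using assms(2) by eventually_elim (use assms(3) in simp)
qed (use assms(1) in measurable)

lemma (in prob_space) abs_integral_diff_le:
  fixes f g :: "'a \<Rightarrow> real"
  assumes f: "integrable M f" and fg: "(\<lambda>x. f x - g x) \<in> borel_measurable M"
    and bound: "AE x in M. \<bar>f x - g x\<bar> \<le> e"
  shows "\<bar>integral\<^sup>L M f - integral\<^sup>L M g\<bar> \<le> e"
proof -
  have int_fg: "integrable M (\<lambda>x. f x - g x)"
    by (rule integrable_const_bound[of _ e]) (use fg bound in auto)
  then have "integrable M g"
    using Bochner_Integration.integrable_diff[OF f int_fg] by simp
  then have "integral\<^sup>L M f - integral\<^sup>L M g = (\<integral>x. f x - g x \<partial>M)"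
    using f by simp
  also have "\<bar>\<dots>\<bar> \<le> (\<integral>x. \<bar>f x - g x\<bar> \<partial>M)"
    by (rule integral_abs_bound)
  also have "\<dots> \<le> e"
    using int_fg bound by (intro integral_le_const) auto
  finally show ?thesis .
qed

section \<open>Laplace transforms determine distributions on the half-line\<close>

lemma integral_polynomial_exp_eq:
  assumes P: "real_distribution P" and Q: "real_distribution Q"
    and P0: "AE x in P. 0 \<le> x" and Q0: "AE x in Q. 0 \<le> x"
    and laplace: "\<And>n::nat. (\<integral>x. exp (- real n * x) \<partial>P) = (\<integral>x. exp (- real n * x) \<partial>Q)"
    and p: "real_polynomial_function p"
  shows "(\<integral>x. p (exp (- x)) \<partial>P) = (\<integral>x. p (exp (- x)) \<partial>Q)"
proof -
  obtain a n where p_eq: "p = (\<lambda>x. \<Sum>i\<le>n. a i * x ^ i)"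
    using p real_polynomial_function_iff_sum by blast
  have exp_power: "exp (- x) ^ i = exp (- real i * x)" for x :: real and i
    by (metis exp_of_nat_mult mult_minus_left mult_minus_right)
  have "(\<integral>x. (\<Sum>i\<le>n. a i * exp (- real i * x)) \<partial>R) = (\<Sum>i\<le>n. a i * (\<integral>x. exp (- real i * x) \<partial>R))"
    if "real_distribution R" "AE x in R. 0 \<le> x" for R
  proof -
    interpret real_distribution R by fact
    show ?thesis
      using integrable_exp_neg_mult[of "\<lambda>x. x"] that(2) by (simp add: integrable_mult_right)
  qed
  from this[OF P P0] this[OF Q Q0] show ?thesis
    unfolding p_eq exp_power using laplace by simp
qed

lemma borel_measurable_comp_exp_neg:
  fixes h :: "real \<Rightarrow> real"
  assumes "continuous_on UNIV h"
  shows "(\<lambda>x. h (exp (- x))) \<in> borel_measurable borel"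
  by (intro borel_measurable_continuous_onI continuous_on_compose2[OF assms])
     (auto intro!: continuous_intros)

lemma integral_continuous_exp_eq:
  fixes f :: "real \<Rightarrow> real"
  assumes P: "real_distribution P" and Q: "real_distribution Q"
    and P0: "AE x in P. 0 \<le> x" and Q0: "AE x in Q. 0 \<le> x"
    and laplace: "\<And>n::nat. (\<integral>x. exp (- real n * x) \<partial>P) = (\<integral>x. exp (- real n * x) \<partial>Q)"
    and f: "continuous_on UNIV f" and f_bound: "\<And>u. \<bar>f u\<bar> \<le> 1"
  shows "(\<integral>x. f (exp (- x)) \<partial>P) = (\<integral>x. f (exp (- x)) \<partial>Q)"
proof -
  have close: "\<bar>(\<integral>x. f (exp (- x)) \<partial>P) - (\<integral>x. f (exp (- x)) \<partial>Q)\<bar> \<le> 0 + 2 * e" if e: "e > 0" for e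
  proof -
    obtain g where g: "polynomial_function g" and approx: "\<forall>u\<in>{0..1}. norm (f u - g u) < e"
      using Stone_Weierstrass_polynomial_function[of "{0..1::real}" f e] e
        continuous_on_subset[OF f] by auto
    have "(\<lambda>x. f (exp (- x)) - g (exp (- x))) \<in> borel_measurable borel"
      using borel_measurable_comp_exp_neg[OF f]
        borel_measurable_comp_exp_neg[OF continuous_on_polymonial_function[OF g]]
      by measurable
    then have approx_integral:
      "\<bar>(\<integral>x. f (exp (- x)) \<partial>R) - (\<integral>x. g (exp (- x)) \<partial>R)\<bar> \<le> e"
      if "real_distribution R" "AE x in R. 0 \<le> x" for R
    proof -
      interpret real_distribution R by fact
      show ?thesis
      proof (rule abs_integral_diff_le)
        show "integrable R (\<lambda>x. f (exp (- x)))"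
          by (rule integrable_const_bound[of _ 1])
             (use f_bound borel_measurable_comp_exp_neg[OF f] in auto)
        show "AE x in R. \<bar>f (exp (- x)) - g (exp (- x))\<bar> \<le> e"
          using that(2) by eventually_elim (use approx in \<open>auto intro: less_imp_le\<close>)
      qed (use \<open>_ \<in> borel_measurable borel\<close> in auto)
    qed
    have "(\<integral>x. g (exp (- x)) \<partial>P) = (\<integral>x. g (exp (- x)) \<partial>Q)"
      by (rule integral_polynomial_exp_eq[OF P Q P0 Q0 laplace])
         (simp add: real_polynomial_function_eq g)
    then show ?thesis
      using approx_integral[OF P P0] approx_integral[OF Q Q0] by linarith
  qed
  have "\<bar>(\<integral>x. f (exp (- x)) \<partial>P) - (\<integral>x. f (exp (- x)) \<partial>Q)\<bar> \<le> 0"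
    by (rule field_le_epsilon) (use close[of "e / 2" for e] in simp)
  then show ?thesis by simp
qed

lemma cdf_le_of_laplace_eq:
  assumes P: "real_distribution P" and Q: "real_distribution Q"
    and P0: "AE x in P. 0 \<le> x" and Q0: "AE x in Q. 0 \<le> x"
    and laplace: "\<And>n::nat. (\<integral>x. exp (- real n * x) \<partial>P) = (\<integral>x. exp (- real n * x) \<partial>Q)"
    and "a < b"
  shows "cdf P a \<le> cdf Q b"
proof -
  interpret P: real_distribution P by fact
  interpret Q: real_distribution Q by fact
  define c d where "c = - exp (- a)" and "d = - exp (- b)"
  have "c < d" using \<open>a < b\<close> by (simp add: c_def d_def)
  \<comment> \<open>\<open>f (exp (-x))\<close> is \<open>1\<close> for \<open>x \<le> a\<close>, \<open>0\<close> for \<open>x \<ge> b\<close>, and continuous in between.\<close>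
  define f where "f = (\<lambda>u. cts_step c d (- u))"
  have f_cont: "continuous_on UNIV f"
    unfolding f_def
    by (intro continuous_on_compose2[OF uniformly_continuous_imp_continuous[OF
          cts_step_uniformly_continuous[OF \<open>c < d\<close>]]]) (auto intro!: continuous_intros)
  have f_bound: "\<bar>f u\<bar> \<le> 1" for u
    using \<open>c < d\<close> by (auto simp: f_def cts_step_def field_simps)
  note f_meas = borel_measurable_comp_exp_neg[OF f_cont]
  have exp_less: "- exp (- b) < - exp (- x)" if "\<not> x \<le> b" for x :: real
    using that by simp
  have "cdf P a = (\<integral>x. indicator {..a} x \<partial>P)"
    by (simp add: cdf_def)
  also have "\<dots> \<le> (\<integral>x. f (exp (- x)) \<partial>P)"
    by (intro integral_mono P.integrable_const_bound[of _ 1])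
       (use f_meas f_bound \<open>c < d\<close> in \<open>auto simp: f_def cts_step_def c_def split: split_indicator\<close>)
  also have "\<dots> = (\<integral>x. f (exp (- x)) \<partial>Q)"
    by (rule integral_continuous_exp_eq[OF P Q P0 Q0 laplace f_cont f_bound])
  also have "\<dots> \<le> (\<integral>x. indicator {..b} x \<partial>Q)"
    by (intro integral_mono Q.integrable_const_bound[of _ 1])
       (use f_meas f_bound \<open>c < d\<close> in
         \<open>auto simp: f_def cts_step_def d_def split: split_indicator dest: exp_less\<close>)
  also have "\<dots> = cdf Q b"
    by (simp add: cdf_def)
  finally show ?thesis .
qed

lemma cdf_le_cdf_of_laplace_eq:
  assumes P: "real_distribution P" and Q: "real_distribution Q"
    and P0: "AE x in P. 0 \<le> x" and Q0: "AE x in Q. 0 \<le> x"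
    and laplace: "\<And>n::nat. (\<integral>x. exp (- real n * x) \<partial>P) = (\<integral>x. exp (- real n * x) \<partial>Q)"
  shows "cdf P a \<le> cdf Q a"
proof (rule tendsto_lowerbound)
  show "(cdf Q \<longlongrightarrow> cdf Q a) (at_right a)"
    using finite_borel_measure.cdf_is_right_cont[OF real_distribution.finite_borel_measure_M[OF Q]]
    by (simp add: continuous_within)
  show "\<forall>\<^sub>F b in at_right a. cdf P a \<le> cdf Q b"
    using eventually_at_right_less[of a]
    by eventually_elim (rule cdf_le_of_laplace_eq[OF P Q P0 Q0 laplace])
qed simp

lemma real_distribution_eq_of_laplace_eq:
  assumes P: "real_distribution P" and Q: "real_distribution Q"
    and P0: "AE x in P. 0 \<le> x" and Q0: "AE x in Q. 0 \<le> x"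
    and laplace: "\<And>n::nat. (\<integral>x. exp (- real n * x) \<partial>P) = (\<integral>x. exp (- real n * x) \<partial>Q)"
  shows "P = Q"
  using cdf_le_cdf_of_laplace_eq[OF P Q P0 Q0 laplace] cdf_le_cdf_of_laplace_eq[OF Q P Q0 P0 laplace[symmetric]]
  by (intro cdf_unique[OF P Q] ext antisym)

lemma distr_eq_of_laplace_eq:
  fixes X :: "'a \<Rightarrow> real" and Y :: "'b \<Rightarrow> real"
  assumes M: "prob_space M" and X: "X \<in> borel_measurable M" and X0: "AE x in M. 0 \<le> X x"
    and N: "prob_space N" and Y: "Y \<in> borel_measurable N" and Y0: "AE x in N. 0 \<le> Y x"
    and laplace: "\<And>s. s > 0 \<Longrightarrow> (\<integral>x. exp (- s * X x) \<partial>M) = (\<integral>x. exp (- s * Y x) \<partial>N)"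
  shows "distr M borel X = distr N borel Y"
proof -
  interpret M: prob_space M by fact
  interpret N: prob_space N by fact
  show ?thesis
  proof (rule real_distribution_eq_of_laplace_eq)
    show "real_distribution (distr M borel X)" "real_distribution (distr N borel Y)"
      using X Y by (simp_all add: M.real_distribution_distr N.real_distribution_distr)
    show "AE x in distr M borel X. 0 \<le> x" "AE x in distr N borel Y. 0 \<le> x"
      using X X0 Y Y0 by (simp_all add: AE_distr_iff)
    fix n :: nat
    have "(\<integral>x. exp (- real n * X x) \<partial>M) = (\<integral>x. exp (- real n * Y x) \<partial>N)"
      using laplace[of "real n"] by (cases "n = 0") (simp_all add: M.prob_space N.prob_space)
    then show "(\<integral>x. exp (- real n * x) \<partial>distr M borel X) = (\<integral>x. exp (- real n * x) \<partial>distr N borel Y)"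
      using X Y by (simp add: integral_distr)
  qed
qed

section \<open>Laplace transforms on the half-line\<close>

lemma nn_integral_exp_neg_mult_atLeast:
  assumes s: "s > 0"
  shows "(\<integral>\<^sup>+t. ennreal (exp (- s * t)) * indicator {c..} t \<partial>lborel) = ennreal (exp (- s * c) / s)"
proof -
  have "(\<integral>\<^sup>+t. ennreal (exp (- s * t)) * indicator {c..} t \<partial>lborel) = ennreal (0 - (- exp (- s * c) / s))"
  proof (rule nn_integral_FTC_atLeast)
    have "((\<lambda>t. - exp (- s * t) / s) \<longlongrightarrow> - 0 / s) at_top"
      by (intro tendsto_divide tendsto_minus filterlim_compose[OF exp_at_bot]
            filterlim_tendsto_neg_mult_at_bot[OF tendsto_const] filterlim_ident) (use s in auto)
    then show "((\<lambda>t. - exp (- s * t) / s) \<longlongrightarrow> 0) at_top" by simp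
  qed (use s in \<open>auto intro!: derivative_eq_intros\<close>)
  then show ?thesis by simp
qed

lemma nn_integral_powr_exp_eq_Gamma:
  assumes a: "a > 0" and s: "s > 0"
  shows "(\<integral>\<^sup>+v. ennreal (indicator {0..} v * v powr (a - 1) * exp (- s * v)) \<partial>lborel)
     = ennreal (Gamma a / s powr a)"
proof -
  let ?g = "\<lambda>v::real. ennreal (indicator {0..} v * v powr (a - 1) * exp (- s * v))"
  have rescale: "?g (0 + (1/s) * x) = ennreal (s powr (1 - a)) * ennreal (indicator {0..} x * x powr (a - 1) / exp x)"
    for x
  proof (cases "x \<ge> 0")
    case True
    have "(x / s) powr (a - 1) = s powr (1 - a) * x powr (a - 1)"
      using True s by (simp add: powr_divide powr_diff)
    then show ?thesis
      using True s by (simp add: ennreal_mult[symmetric] exp_minus field_simps)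
  qed (use s in \<open>simp add: zero_le_divide_iff\<close>)
  have "(\<integral>\<^sup>+v. ?g v \<partial>lborel) = \<bar>1/s\<bar> * (\<integral>\<^sup>+x. ?g (0 + (1/s) * x) \<partial>lborel)"
    by (rule nn_integral_real_affine) (use s in auto)
  also have "\<dots> = ennreal (1 / s) *
      (\<integral>\<^sup>+x. ennreal (s powr (1 - a)) * ennreal (indicator {0..} x * x powr (a - 1) / exp x) \<partial>lborel)"
    using s by (simp only: rescale) simp
  also have "\<dots> = ennreal (1 / s) * (ennreal (s powr (1 - a)) * ennreal (Gamma a))"
    by (simp add: nn_integral_cmult Gamma_conv_nn_integral_real[OF a])
  also have "\<dots> = ennreal (Gamma a / s powr a)"
    using s Gamma_real_pos[OF a] by (simp add: ennreal_mult[symmetric] powr_diff field_simps)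
  finally show ?thesis .
qed

lemma nn_integral_exp_shift:
  fixes T :: "real \<Rightarrow> real"
  assumes T: "T \<in> borel_measurable borel" and T0: "\<And>u. 0 \<le> T u"
  shows "(\<integral>\<^sup>+t. ennreal (exp (- s * t) * T (t - v)) * indicator {v<..} t \<partial>lborel)
       = ennreal (exp (- s * v)) * (\<integral>\<^sup>+u. ennreal (exp (- s * u) * T u) * indicator {0<..} u \<partial>lborel)"
proof -
  have [measurable]: "T \<in> borel_measurable borel" by fact
  let ?g = "\<lambda>t. ennreal (exp (- s * t) * T (t - v)) * indicator {v<..} t"
  have "(\<integral>\<^sup>+t. ?g t \<partial>lborel) = (\<integral>\<^sup>+u. ?g (v + 1 * u) \<partial>lborel)"
    using nn_integral_real_affine[of ?g 1 v] by simp
  also have "\<dots> = (\<integral>\<^sup>+u. ennreal (exp (- s * v)) * (ennreal (exp (- s * u) * T u) * indicator {0<..} u) \<partial>lborel)"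
    using T0 by (intro nn_integral_cong)
      (auto simp: indicator_def ennreal_mult[symmetric] algebra_simps exp_add[symmetric])
  also have "\<dots> = ennreal (exp (- s * v)) * (\<integral>\<^sup>+u. ennreal (exp (- s * u) * T u) * indicator {0<..} u \<partial>lborel)"
    using T by (intro nn_integral_cmult) measurable
  finally show ?thesis .
qed

lemma nn_integral_laplace_convolution_powr:
  fixes T :: "real \<Rightarrow> real"
  assumes T: "T \<in> borel_measurable borel" and T0: "\<And>u. 0 \<le> T u"
    and a: "0 < a" and s: "0 < s"
  shows "(\<integral>\<^sup>+t. ennreal (exp (- s * t)) * indicator {0<..} t *
            (\<integral>\<^sup>+v. ennreal (T (t - v) * v powr (a - 1)) * indicator {0<..<t} v \<partial>lborel) \<partial>lborel)
       = ennreal (Gamma a / s powr a) * (\<integral>\<^sup>+u. ennreal (exp (- s * u) * T u) * indicator {0<..} u \<partial>lborel)"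
proof -
  have [measurable]: "T \<in> borel_measurable borel" by fact
  let ?LT = "\<integral>\<^sup>+u. ennreal (exp (- s * u) * T u) * indicator {0<..} u \<partial>lborel"
  let ?h = "\<lambda>t v. ennreal (exp (- s * t)) * ennreal (T (t - v) * v powr (a - 1)) *
              indicator {0<..} v * (if v < t then 1 else 0)"
  have "(\<integral>\<^sup>+t. ennreal (exp (- s * t)) * indicator {0<..} t *
            (\<integral>\<^sup>+v. ennreal (T (t - v) * v powr (a - 1)) * indicator {0<..<t} v \<partial>lborel) \<partial>lborel)
      = (\<integral>\<^sup>+t. \<integral>\<^sup>+v. ?h t v \<partial>lborel \<partial>lborel)"
    by (subst nn_integral_cmult[symmetric], measurable)
       (intro nn_integral_cong, auto simp: indicator_def)
  also have "\<dots> = (\<integral>\<^sup>+v. \<integral>\<^sup>+t. ?h t v \<partial>lborel \<partial>lborel)"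
    by (rule lborel_pair.Fubini'[symmetric]) measurable
  also have "\<dots> = (\<integral>\<^sup>+v. ennreal (indicator {0..} v * v powr (a - 1) * exp (- s * v)) * ?LT \<partial>lborel)"
  proof (rule nn_integral_cong_AE)
    have "(\<integral>\<^sup>+t. ?h t v \<partial>lborel) = ennreal (indicator {0..} v * v powr (a - 1) * exp (- s * v)) * ?LT"
      if "v \<noteq> 0" for v :: real
    proof (cases "v > 0")
      case True
      have "(\<integral>\<^sup>+t. ?h t v \<partial>lborel) = (\<integral>\<^sup>+t. ennreal (v powr (a - 1)) *
              (ennreal (exp (- s * t) * T (t - v)) * indicator {v<..} t) \<partial>lborel)"
        using True T0 by (intro nn_integral_cong) (auto simp: indicator_def ennreal_mult[symmetric] mult_ac)
      also have "\<dots> = ennreal (v powr (a - 1)) *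
          (\<integral>\<^sup>+t. ennreal (exp (- s * t) * T (t - v)) * indicator {v<..} t \<partial>lborel)"
        by (rule nn_integral_cmult) measurable
      also have "\<dots> = ennreal (v powr (a - 1)) * (ennreal (exp (- s * v)) * ?LT)"
        by (simp only: nn_integral_exp_shift[OF T T0])
      finally show ?thesis
        using True by (simp add: ennreal_mult mult_ac)
    qed (use that in \<open>simp add: indicator_def\<close>)
    then show "AE v in lborel. (\<integral>\<^sup>+t. ?h t v \<partial>lborel) =
        ennreal (indicator {0..} v * v powr (a - 1) * exp (- s * v)) * ?LT"
      using AE_lborel_singleton[of 0] by (auto elim!: eventually_mono)
  qed
  also have "\<dots> = ennreal (Gamma a / s powr a) * ?LT"
    using nn_integral_powr_exp_eq_Gamma[OF a s] by (simp add: nn_integral_multc)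
  finally show ?thesis .
qed

lemma nn_integral_convolution_powr_eq_set_integral:
  fixes T :: "real \<Rightarrow> real"
  assumes T: "T \<in> borel_measurable borel" and T_range: "\<And>u. 0 \<le> T u" "\<And>u. T u \<le> 1"
    and a: "0 < a"
  shows "(\<integral>\<^sup>+v. ennreal (T (t - v) * v powr (a - 1)) * indicator {0<..<t} v \<partial>lborel)
       = ennreal (LINT v:{0<..<t}|lborel. T (t - v) * v powr (a - 1))"
proof -
  have [measurable]: "T \<in> borel_measurable borel" by fact
  let ?g = "\<lambda>v. indicator {0<..<t} v *\<^sub>R (T (t - v) * v powr (a - 1))"
  have g0: "0 \<le> indicator {0<..<t} v * (T (t - v) * v powr (a - 1))" for v
    using T_range by (auto simp: indicator_def)
  have nn_eq: "(\<integral>\<^sup>+v. ennreal (?g v) \<partial>lborel)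
      = (\<integral>\<^sup>+v. ennreal (T (t - v) * v powr (a - 1)) * indicator {0<..<t} v \<partial>lborel)"
    by (intro nn_integral_cong) (auto simp: indicator_def)
  \<comment> \<open>On \<open>(0, t)\<close> the integrand is dominated by \<open>exp t * v\<^sup>a\<^sup>-\<^sup>1 exp (-v)\<close>, which has integral \<open>exp t * \<Gamma>(a)\<close>.\<close>
  have "(\<integral>\<^sup>+v. ennreal (?g v) \<partial>lborel)
      \<le> (\<integral>\<^sup>+v. ennreal (exp t) * ennreal (indicator {0..} v * v powr (a - 1) * exp (- 1 * v)) \<partial>lborel)"
  proof (rule nn_integral_mono)
    fix v :: real
    show "ennreal (?g v) \<le> ennreal (exp t) * ennreal (indicator {0..} v * v powr (a - 1) * exp (- 1 * v))"
    proof (cases "v \<in> {0<..<t}")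
      case True
      have "T (t - v) * v powr (a - 1) \<le> 1 * v powr (a - 1)"
        using T_range by (intro mult_right_mono) auto
      also have "\<dots> \<le> (exp t * exp (- v)) * v powr (a - 1)"
        using True by (intro mult_right_mono) (auto simp: exp_add[symmetric])
      finally show ?thesis
        using True by (simp add: ennreal_mult[symmetric] indicator_def mult_ac)
    qed (auto simp: indicator_def)
  qed
  also have "\<dots> < \<infinity>"
    using nn_integral_powr_exp_eq_Gamma[OF a, of 1] by (simp add: nn_integral_cmult ennreal_mult_less_top)
  finally have "integrable lborel ?g"
    by (intro integrableI_nonneg) (auto simp: g0)
  then have "(\<integral>\<^sup>+v. ennreal (?g v) \<partial>lborel) = ennreal (integral\<^sup>L lborel ?g)"
    by (intro nn_integral_eq_integral) (auto simp: g0)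
  then show ?thesis
    using nn_eq by (simp add: set_lebesgue_integral_def)
qed

section \<open>Laplace transforms of distribution functions\<close>

lemma (in prob_space) borel_measurable_prob_le:
  fixes W :: "'a \<Rightarrow> real"
  assumes "W \<in> borel_measurable M"
  shows "(\<lambda>u. prob {x \<in> space M. W x \<le> u}) \<in> borel_measurable borel"
  by (intro borel_measurable_mono monoI finite_measure_mono) (use assms in auto)

lemma (in prob_space) prob_gt_eq_1_minus_prob_le:
  fixes W :: "'a \<Rightarrow> real"
  assumes "W \<in> borel_measurable M"
  shows "prob {x \<in> space M. W x > u} = 1 - prob {x \<in> space M. W x \<le> u}"
proof -
  have "{x \<in> space M. W x > u} = space M - {x \<in> space M. W x \<le> u}" by auto
  then show ?thesis
    using assms by (simp add: prob_compl)
qed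

lemma (in prob_space) borel_measurable_prob_gt:
  fixes W :: "'a \<Rightarrow> real"
  assumes "W \<in> borel_measurable M"
  shows "(\<lambda>u. prob {x \<in> space M. W x > u}) \<in> borel_measurable borel"
  using borel_measurable_prob_le[OF assms]
  by (simp add: prob_gt_eq_1_minus_prob_le[OF assms])

lemma (in prob_space) nn_integral_exp_prob_le:
  fixes W :: "'a \<Rightarrow> real"
  assumes W: "W \<in> borel_measurable M" and W0: "AE x in M. 0 \<le> W x" and s: "s > 0"
  shows "(\<integral>\<^sup>+t. ennreal (exp (- s * t) * prob {x \<in> space M. W x \<le> t}) * indicator {0<..} t \<partial>lborel)
     = ennreal ((\<integral>x. exp (- s * W x) \<partial>M) / s)"
proof -
  interpret pair_sigma_finite lborel M
    by (intro pair_sigma_finite.intro lborel.sigma_finite_measure_axioms sigma_finite_measure_axioms)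
  have [measurable]: "W \<in> borel_measurable M" by fact
  let ?f = "\<lambda>t x. ennreal (exp (- s * t) * indicator {0<..} t * (if W x \<le> t then 1 else 0))"
  have "(\<integral>\<^sup>+x. ?f t x \<partial>M) = ennreal (exp (- s * t) * prob {x \<in> space M. W x \<le> t}) * indicator {0<..} t"
    for t
  proof -
    have "(\<integral>\<^sup>+x. ?f t x \<partial>M) = (\<integral>\<^sup>+x. ennreal (exp (- s * t) * indicator {0<..} t) *
            indicator {x \<in> space M. W x \<le> t} x \<partial>M)"
      by (intro nn_integral_cong) (auto simp: indicator_def)
    also have "\<dots> = ennreal (exp (- s * t) * indicator {0<..} t) * emeasure M {x \<in> space M. W x \<le> t}"
      by (intro nn_integral_cmult_indicator) measurable
    finally show ?thesis
      by (simp add: emeasure_eq_measure ennreal_mult[symmetric] indicator_def)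
  qed
  then have "(\<integral>\<^sup>+t. ennreal (exp (- s * t) * prob {x \<in> space M. W x \<le> t}) * indicator {0<..} t \<partial>lborel)
      = (\<integral>\<^sup>+t. \<integral>\<^sup>+x. ?f t x \<partial>M \<partial>lborel)"
    by simp
  also have "\<dots> = (\<integral>\<^sup>+x. \<integral>\<^sup>+t. ?f t x \<partial>lborel \<partial>M)"
    by (rule Fubini'[symmetric]) measurable
  also have "\<dots> = (\<integral>\<^sup>+x. ennreal (exp (- s * W x) / s) \<partial>M)"
  proof (rule nn_integral_cong_AE)
    have "(\<integral>\<^sup>+t. ?f t x \<partial>lborel) = ennreal (exp (- s * W x) / s)" if "0 \<le> W x" for x
    proof -
      have "(\<integral>\<^sup>+t. ?f t x \<partial>lborel) = (\<integral>\<^sup>+t. ennreal (exp (- s * t)) * indicator {W x..} t \<partial>lborel)"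
        by (intro nn_integral_cong_AE)
           (use AE_lborel_singleton[of 0] that in \<open>auto elim!: eventually_mono simp: indicator_def\<close>)
      also have "\<dots> = ennreal (exp (- s * W x) / s)"
        by (rule nn_integral_exp_neg_mult_atLeast[OF s])
      finally show ?thesis .
    qed
    then show "AE x in M. (\<integral>\<^sup>+t. ?f t x \<partial>lborel) = ennreal (exp (- s * W x) / s)"
      using W0 by (auto elim!: eventually_mono)
  qed
  also have "\<dots> = ennreal (\<integral>x. exp (- s * W x) / s \<partial>M)"
    using integrable_exp_neg_mult[OF W W0] s by (intro nn_integral_eq_integral) auto
  finally show ?thesis by simp
qed

lemma (in prob_space) nn_integral_exp_prob_gt:
  fixes W :: "'a \<Rightarrow> real"
  assumes W: "W \<in> borel_measurable M" and W0: "AE x in M. 0 \<le> W x" and s: "s > 0"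
  shows "(\<integral>\<^sup>+t. ennreal (exp (- s * t) * prob {x \<in> space M. W x > t}) * indicator {0<..} t \<partial>lborel)
     = ennreal ((1 - (\<integral>x. exp (- s * W x) \<partial>M)) / s)"
proof -
  let ?F = "\<lambda>u. prob {x \<in> space M. W x \<le> u}"
  let ?T = "\<lambda>u. prob {x \<in> space M. W x > u}"
  let ?phi = "\<integral>x. exp (- s * W x) \<partial>M"
  have [measurable]: "?F \<in> borel_measurable borel" "?T \<in> borel_measurable borel"
    using borel_measurable_prob_le[OF W] borel_measurable_prob_gt[OF W] by auto
  have "(\<integral>\<^sup>+t. ennreal (exp (- s * t) * ?T t) * indicator {0<..} t \<partial>lborel)
      + (\<integral>\<^sup>+t. ennreal (exp (- s * t) * ?F t) * indicator {0<..} t \<partial>lborel)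
      = (\<integral>\<^sup>+t. ennreal (exp (- s * t) * ?T t) * indicator {0<..} t
            + ennreal (exp (- s * t) * ?F t) * indicator {0<..} t \<partial>lborel)"
    by (rule nn_integral_add[symmetric]) auto
  also have "\<dots> = (\<integral>\<^sup>+t. ennreal (exp (- s * t)) * indicator {0..} t \<partial>lborel)"
  proof (rule nn_integral_cong_AE)
    have "ennreal (exp (- s * t) * ?T t) * indicator {0<..} t + ennreal (exp (- s * t) * ?F t) * indicator {0<..} t
        = ennreal (exp (- s * t)) * indicator {0..} t" if "t \<noteq> 0" for t
      using that prob_gt_eq_1_minus_prob_le[OF W, of t]
      by (auto simp: indicator_def ennreal_plus[symmetric] distrib_left[symmetric] simp del: ennreal_plus)
    then show "AE t in lborel. ennreal (exp (- s * t) * ?T t) * indicator {0<..} t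
        + ennreal (exp (- s * t) * ?F t) * indicator {0<..} t = ennreal (exp (- s * t)) * indicator {0..} t"
      using AE_lborel_singleton[of 0] by (auto elim!: eventually_mono)
  qed
  also have "\<dots> = ennreal (1 / s)"
    using nn_integral_exp_neg_mult_atLeast[OF s, of 0] by simp
  finally have sum: "(\<integral>\<^sup>+t. ennreal (exp (- s * t) * ?T t) * indicator {0<..} t \<partial>lborel) + ennreal (?phi / s)
      = ennreal (1 / s)"
    using nn_integral_exp_prob_le[OF W W0 s] by simp
  have "0 \<le> ?phi"
    by (intro integral_nonneg_AE) auto
  have "(\<integral>\<^sup>+t. ennreal (exp (- s * t) * ?T t) * indicator {0<..} t \<partial>lborel) = ennreal (1 / s) - ennreal (?phi / s)"
    using sum[symmetric] by (simp add: ennreal_add_diff_cancel_right)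
  also have "\<dots> = ennreal ((1 - ?phi) / s)"
    using \<open>0 \<le> ?phi\<close> s by (simp add: ennreal_minus diff_divide_distrib)
  finally show ?thesis .
qed

lemma (in prob_space) laplace_of_renewal_equation_powr:
  fixes W :: "'a \<Rightarrow> real"
  assumes W: "W \<in> borel_measurable M" and W0: "AE x in M. 0 \<le> W x" and a: "0 < a"
    and renewal: "\<And>t. t > 0 \<Longrightarrow> prob {x \<in> space M. W x \<le> t} =
        (LINT v:{0<..<t}|lborel. prob {x \<in> space M. W x > t - v} * v powr (a - 1))"
    and s: "s > 0"
  shows "(\<integral>x. exp (- s * W x) \<partial>M) = 1 / (1 + (1 / Gamma a) * s powr a)"
proof -
  let ?F = "\<lambda>u. prob {x \<in> space M. W x \<le> u}"
  let ?T = "\<lambda>u. prob {x \<in> space M. W x > u}"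
  let ?phi = "\<integral>x. exp (- s * W x) \<partial>M"
  let ?conv = "\<lambda>t. \<integral>\<^sup>+v. ennreal (?T (t - v) * v powr (a - 1)) * indicator {0<..<t} v \<partial>lborel"
  have T_meas: "?T \<in> borel_measurable borel"
    by (rule borel_measurable_prob_gt[OF W])
  have "ennreal (exp (- s * t) * ?F t) * indicator {0<..} t
      = ennreal (exp (- s * t)) * indicator {0<..} t * ?conv t" for t
  proof (cases "t > 0")
    case True
    have "?conv t = ennreal (?F t)"
      using nn_integral_convolution_powr_eq_set_integral[OF T_meas _ _ a, of t] renewal[OF True] by simp
    then show ?thesis
      using True by (simp only:) (simp add: ennreal_mult)
  qed (simp add: indicator_def)
  then have "ennreal (?phi / s) = (\<integral>\<^sup>+t. ennreal (exp (- s * t)) * indicator {0<..} t * ?conv t \<partial>lborel)"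
    using nn_integral_exp_prob_le[OF W W0 s] by simp
  also have "\<dots> = ennreal (Gamma a / s powr a) * ennreal ((1 - ?phi) / s)"
    using nn_integral_laplace_convolution_powr[OF T_meas _ a s] nn_integral_exp_prob_gt[OF W W0 s]
    by simp
  finally have laplace_eq: "ennreal (?phi / s) = ennreal (Gamma a / s powr a) * ennreal ((1 - ?phi) / s)" .
  have phi_range: "0 \<le> ?phi" "?phi \<le> 1"
    using integrable_exp_neg_mult[OF W W0, of s] s W0
    by (auto intro!: integral_nonneg_AE integral_le_const elim!: eventually_mono)
  have Gamma_pos: "Gamma a > 0"
    using Gamma_real_pos[OF a] .
  have "?phi / s = Gamma a / s powr a * ((1 - ?phi) / s)"
    using laplace_eq phi_range s Gamma_pos by (simp add: ennreal_mult[symmetric])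
  then have "?phi * (s powr a + Gamma a) = Gamma a"
    using s by (simp add: field_simps)
  moreover have "Gamma a + s powr a > 0"
    using Gamma_pos by (simp add: add_pos_nonneg)
  ultimately show ?thesis
    using Gamma_pos by (simp add: field_simps)
qed

section \<open>The Laplace transform of \<open>c\<^sup>\<beta> \<E>\<^sup>\<beta> \<G>\<close>\<close>

lemma (in prob_space) exponential_distributed_of_tail:
  fixes E :: "'a \<Rightarrow> real"
  assumes E: "E \<in> borel_measurable M" and tail: "\<forall>t\<ge>0. prob {x \<in> space M. E x > t} = exp (- t)"
  shows "distributed M lborel E (exponential_density 1)"
  using E tail prob_gt_eq_1_minus_prob_le[OF E] by (subst exponential_distributed_iff) auto

lemma (in prob_space) nn_integral_exp_exponential:
  assumes E: "distributed M lborel E (exponential_density 1)" and k: "k > -1"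
  shows "(\<integral>\<^sup>+x. ennreal (exp (- k * E x)) \<partial>M) = ennreal (1 / (1 + k))"
proof -
  have "(\<integral>\<^sup>+x. ennreal (exp (- k * E x)) \<partial>M)
      = (\<integral>\<^sup>+x. ennreal (exponential_density 1 x) * ennreal (exp (- k * x)) \<partial>lborel)"
    by (rule distributed_nn_integral[OF E, symmetric]) simp
  also have "\<dots> = (\<integral>\<^sup>+x. ennreal (exp (- (1 + k) * x)) * indicator {0..} x \<partial>lborel)"
    by (intro nn_integral_cong)
       (auto simp: exponential_density_def indicator_def ennreal_mult[symmetric] exp_add[symmetric] algebra_simps)
  also have "\<dots> = ennreal (1 / (1 + k))"
    using nn_integral_exp_neg_mult_atLeast[of "1 + k" 0] k by simp
  finally show ?thesis .
qed

lemma (in prob_space) nn_integral_indep_var: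
  fixes X Y :: "'a \<Rightarrow> 'b::topological_space"
  assumes indep: "indep_var borel X borel Y" and h: "h \<in> borel_measurable (borel \<Otimes>\<^sub>M borel)"
  shows "(\<integral>\<^sup>+x. h (X x, Y x) \<partial>M) = (\<integral>\<^sup>+u. \<integral>\<^sup>+v. h (u, v) \<partial>distr M borel Y \<partial>distr M borel X)"
proof -
  have X: "X \<in> borel_measurable M" and Y: "Y \<in> borel_measurable M"
    using indep by (simp_all add: indep_var_distribution_eq)
  interpret Y: prob_space "distr M borel Y"
    using Y by (rule prob_space_distr)
  have "(\<integral>\<^sup>+x. h (X x, Y x) \<partial>M) = (\<integral>\<^sup>+z. h z \<partial>distr M (borel \<Otimes>\<^sub>M borel) (\<lambda>x. (X x, Y x)))"
    using X Y h by (subst nn_integral_distr) auto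
  also have "\<dots> = (\<integral>\<^sup>+z. h z \<partial>(distr M borel X \<Otimes>\<^sub>M distr M borel Y))"
  proof -
    have "distr M borel X \<Otimes>\<^sub>M distr M borel Y = distr M (borel \<Otimes>\<^sub>M borel) (\<lambda>x. (X x, Y x))"
      using indep indep_var_distribution_eq by blast
    then show ?thesis by simp
  qed
  also have "\<dots> = (\<integral>\<^sup>+u. \<integral>\<^sup>+v. h (u, v) \<partial>distr M borel Y \<partial>distr M borel X)"
    using h by (intro Y.nn_integral_fst[symmetric]) simp
  finally show ?thesis .
qed

lemma (in prob_space) laplace_scaled_product:
  fixes E G :: "'a \<Rightarrow> real"
  assumes E: "distributed M lborel E (exponential_density 1)"
    and G: "G \<in> borel_measurable M" and G0: "AE x in M. 0 \<le> G x"
    and indep: "indep_var borel E borel G"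
    and G_laplace: "\<forall>s>0. (\<integral>x. exp (- s * G x) \<partial>M) = exp (- (s powr (1 / \<beta>)))"
    and \<beta>: "\<beta> > 0" and c: "c > 0" and s: "s > 0"
  shows "(\<integral>x. exp (- s * (c powr \<beta> * E x powr \<beta> * G x)) \<partial>M) = 1 / (1 + c * s powr (1 / \<beta>))"
proof -
  have [measurable]: "E \<in> borel_measurable M" "G \<in> borel_measurable M"
    using distributed_measurable[OF E] G by simp_all
  define k where "k = c * s powr (1 / \<beta>)"
  have k: "k > 0" using c s by (simp add: k_def)
  let ?h = "\<lambda>z::real \<times> real. ennreal (exp (- s * (c powr \<beta> * fst z powr \<beta> * snd z)))"
  \<comment> \<open>Given \<open>\<E> = e > 0\<close>, the inner integral is the Laplace transform of \<open>\<G>\<close> at \<open>s c\<^sup>\<beta> e\<^sup>\<beta>\<close>.\<close>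
  have inner: "(\<integral>\<^sup>+g. ?h (e, g) \<partial>distr M borel G) = ennreal (exp (- k * e))" if e: "e > 0" for e
  proof -
    define s' where "s' = s * c powr \<beta> * e powr \<beta>"
    have s': "s' > 0" using s c e by (simp add: s'_def)
    have "(\<integral>\<^sup>+g. ?h (e, g) \<partial>distr M borel G) = (\<integral>\<^sup>+x. ennreal (exp (- s' * G x)) \<partial>M)"
      by (subst nn_integral_distr) (auto simp: s'_def mult_ac)
    also have "\<dots> = ennreal (exp (- (s' powr (1 / \<beta>))))"
      using integrable_exp_neg_mult[OF G G0] s' G_laplace by (subst nn_integral_eq_integral) auto
    also have "s' powr (1 / \<beta>) = k * e"
      using s c e \<beta> by (simp add: s'_def k_def powr_mult powr_powr mult_ac)
    finally show ?thesis by simp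
  qed
  have "AE x in M. E x > 0"
    by (subst distributed_AE2[OF E])
       (use AE_lborel_singleton[of 0] in \<open>auto simp: exponential_density_def elim!: eventually_mono\<close>)
  then have E_pos: "AE e in distr M borel E. e > 0"
    by (subst AE_distr_iff) auto
  have "(\<integral>\<^sup>+x. ennreal (exp (- s * (c powr \<beta> * E x powr \<beta> * G x))) \<partial>M)
      = (\<integral>\<^sup>+e. \<integral>\<^sup>+g. ?h (e, g) \<partial>distr M borel G \<partial>distr M borel E)"
    using nn_integral_indep_var[OF indep, of ?h] by simp
  also have "\<dots> = (\<integral>\<^sup>+e. ennreal (exp (- k * e)) \<partial>distr M borel E)"
  proof (rule nn_integral_cong_AE)
    show "AE e in distr M borel E. (\<integral>\<^sup>+g. ?h (e, g) \<partial>distr M borel G) = ennreal (exp (- k * e))"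
      using E_pos by (rule eventually_mono) (rule inner)
  qed
  also have "\<dots> = ennreal (1 / (1 + k))"
    using nn_integral_exp_exponential[OF E] k by (simp add: nn_integral_distr)
  finally show ?thesis
    using k by (simp add: integral_eq_nn_integral k_def)
qed

theorem lemma3p9:
  fixes M :: "'a measure" and W :: "'a \<Rightarrow> real" and \<alpha> \<beta> :: real
  assumes alpha: "1 < \<alpha>" "\<alpha> \<le> 2"
    and beta: "1 / \<alpha> + 1 / \<beta> = 1"
    and M: "prob_space M"
    and W_meas: "W \<in> borel_measurable M"
    and W_nonneg: "AE x in M. 0 \<le> W x"
    and W_eq: "\<And>t. t > 0 \<Longrightarrow>
        measure M {x \<in> space M. W x \<le> t} =
        (LINT v:{0<..<t}|lborel. measure M {x \<in> space M. W x > t - v} / v powr (1 / \<alpha>))"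
  shows "(\<forall>s>0. (\<integral>x. exp (- s * W x) \<partial>M)
            = 1 / (1 + (1 / Gamma (1 / \<beta>)) * s powr (1 / \<beta>)))
      \<and> (\<forall>(N :: 'b measure) E G.
          prob_space N \<longrightarrow>
          E \<in> borel_measurable N \<longrightarrow> G \<in> borel_measurable N \<longrightarrow>
          prob_space.indep_var N borel E borel G \<longrightarrow>
          (\<forall>t\<ge>0. measure N {x \<in> space N. E x > t} = exp (- t)) \<longrightarrow>
          (AE x in N. 0 \<le> G x) \<longrightarrow>
          (\<forall>s>0. (\<integral>x. exp (- s * G x) \<partial>N) = exp (- (s powr (1 / \<beta>)))) \<longrightarrow>
          distr M borel W =
          distr N borel (\<lambda>x. (1 / Gamma (1 / \<beta>)) powr \<beta> * E x powr \<beta> * G x))"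
proof -
  interpret M: prob_space M by fact
  define a where "a = 1 / \<beta>"
  have a_eq: "a = 1 - 1 / \<alpha>"
    using beta by (simp add: a_def)
  have a: "a > 0" "a - 1 = - (1 / \<alpha>)"
    using alpha by (simp_all add: a_eq)
  have renewal: "measure M {x \<in> space M. W x \<le> t} =
      (LINT v:{0<..<t}|lborel. measure M {x \<in> space M. W x > t - v} * v powr (a - 1))" if "t > 0" for t
    using W_eq[OF that] by (simp add: a(2) powr_minus_divide)
  have laplace_W: "(\<integral>x. exp (- s * W x) \<partial>M) = 1 / (1 + (1 / Gamma a) * s powr a)" if "s > 0" for s
    by (rule M.laplace_of_renewal_equation_powr[OF W_meas W_nonneg a(1) renewal that])
  show ?thesis
  proof (intro conjI allI impI)
    fix N :: "'b measure" and E G :: "'b \<Rightarrow> real"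
    assume N: "prob_space N" and E: "E \<in> borel_measurable N" and G: "G \<in> borel_measurable N"
      and indep: "prob_space.indep_var N borel E borel G"
      and E_tail: "\<forall>t\<ge>0. measure N {x \<in> space N. E x > t} = exp (- t)"
      and G0: "AE x in N. 0 \<le> G x"
      and G_laplace: "\<forall>s>0. (\<integral>x. exp (- s * G x) \<partial>N) = exp (- (s powr (1 / \<beta>)))"
    interpret N: prob_space N by fact
    have "\<beta> > 0" "1 / Gamma (1 / \<beta>) > 0"
      using a Gamma_real_pos[OF a(1)] by (auto simp: a_def)
    note laplace_Y = N.laplace_scaled_product[OF N.exponential_distributed_of_tail[OF E E_tail]
        G G0 indep G_laplace this]
    show "distr M borel W = distr N borel (\<lambda>x. (1 / Gamma (1 / \<beta>)) powr \<beta> * E x powr \<beta> * G x)"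
      using laplace_W laplace_Y E G G0
      by (intro distr_eq_of_laplace_eq[OF M W_meas W_nonneg N])
         (auto simp: a_def elim!: eventually_mono)
  qed (use laplace_W in \<open>simp add: a_def\<close>)
qed

end
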